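(* Let $P\in\mathbb{R}_+^{n\times n}$ be sub-stochastic, $w\in\mathbb{R}^n_+$, $c\in\mathbb{R}^n$, and let $\mathcal X=\{x\in\mathbb{R}^n:\,x=S_0^w(P'x+c)\}$. Then there exists a partition $\mathcal V=\{1,\dots,n\}=\mathcal V_+\cup\mathcal V_0\cup\mathcal V_-$ such that (i) every equilibrium $x\in\mathcal X$ satisfies $x_{\mathcal V_-}=0$, $x_{\mathcal V_+}=w_{\mathcal V_+}$, and $x_i=c_i+\sum_{j}P_{ji}x_j$ for every $i\in\mathcal V_0$; (ii) for any two equilibria $x^{(1)},x^{(2)}\in\mathcal X$, $x^{(1)}_{\mathcal V_-}=x^{(2)}_{\mathcal V_-}$ and $x^{(1)}_{\mathcal V_+}=x^{(2)}_{\mathcal V_+}$.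
   Context: $P$ sub-stochastic: nonnegative with $P\mathbbm{1}\le\mathbbm{1}$. $(S_0^w(x))_i=\min\{\max\{x_i,0\},w_i\}$; $P'$ is the transpose. For a vector $v$ and $\mathcal A\subseteq\{1,\dots,n\}$, $v_{\mathcal A}$ is the subvector indexed by $\mathcal A$. *)

theory Defs
  imports "HOL-Analysis.Analysis"
begin

definition substochastic :: "real^'n^'n \<Rightarrow> bool" where
  "substochastic P \<longleftrightarrow> (\<forall>i j. 0 \<le> P $ i $ j) \<and> (\<forall>i. (\<Sum>j\<in>UNIV. P $ i $ j) \<le> 1)"

definition sat0 :: "real^'n \<Rightarrow> real^'n \<Rightarrow> real^'n" where
  "sat0 w x = (\<chi> i. min (max (x $ i) 0) (w $ i))"

definition equilibria :: "real^'n^'n \<Rightarrow> real^'n \<Rightarrow> real^'n \<Rightarrow> (real^'n) set" where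
  "equilibria P w c = {x. x = sat0 w (transpose P *v x + c)}"

end

theory Submission
  imports Defs
begin

text \<open>Write \<open>T x = P' x + c\<close>, so that the equilibria are the fixed points of \<open>S\<^sub>0\<^sup>w \<circ> T\<close>.
  Clamping to \<open>[0, w\<^sub>i]\<close> is 1-Lipschitz and \<open>P'\<close> has column sums at most one, so
  \<open>S\<^sub>0\<^sup>w \<circ> T\<close> is nonexpansive in the \<open>l\<^sub>1\<close> norm. For two equilibria \<open>x, y\<close> the chain
  \<open>\<parallel>x - y\<parallel>\<^sub>1 \<le> \<parallel>T x - T y\<parallel>\<^sub>1 \<le> \<parallel>x - y\<parallel>\<^sub>1\<close> is therefore tight coordinatewise:
  \<open>\<bar>x\<^sub>i - y\<^sub>i\<bar> = \<bar>(T x)\<^sub>i - (T y)\<^sub>i\<bar>\<close>. Clamping strictly shortens every distance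
  from a point outside \<open>[0, w\<^sub>i]\<close> unless both images coincide, so a coordinate that is
  saturated (at \<open>0\<close> or at \<open>w\<^sub>i\<close>) in one equilibrium has the same value in all of them.
  The partition is: \<open>\<V>\<^sub>0\<close> the coordinates unsaturated in every equilibrium, \<open>\<V>\<^sub>-\<close>
  those saturated at \<open>0\<close> in some equilibrium, \<open>\<V>\<^sub>+\<close> the rest.\<close>

lemma clamp_dist_le:
  fixes a b u :: real
  shows "\<bar>min (max a 0) u - min (max b 0) u\<bar> \<le> \<bar>a - b\<bar>"
  by (auto simp: min_def max_def abs_if)

lemma clamp_dist_eq_imp_eq:
  fixes a b u :: real
  assumes "0 \<le> u" "min (max a 0) u \<noteq> a"
    and "\<bar>min (max a 0) u - min (max b 0) u\<bar> = \<bar>a - b\<bar>"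
  shows "min (max b 0) u = min (max a 0) u"
  using assms by (auto simp: min_def max_def abs_if split: if_splits)

lemma clamp_ne_imp_bound:
  fixes a u :: real
  assumes "min (max a 0) u \<noteq> a"
  shows "min (max a 0) u = 0 \<or> min (max a 0) u = u"
  using assms by (auto simp: min_def max_def)

lemma sum_abs_transpose_mult_le:
  fixes P :: "real^'n^'n"
  assumes "substochastic P"
  shows "(\<Sum>i\<in>UNIV. \<bar>(transpose P *v v) $ i\<bar>) \<le> (\<Sum>j\<in>UNIV. \<bar>v $ j\<bar>)"
proof -
  have nonneg: "0 \<le> P $ j $ i" for i j
    using assms by (simp add: substochastic_def)
  have row_sum: "(\<Sum>i\<in>UNIV. P $ j $ i) \<le> 1" for j
    using assms by (simp add: substochastic_def)
  have "\<bar>(transpose P *v v) $ i\<bar> \<le> (\<Sum>j\<in>UNIV. P $ j $ i * \<bar>v $ j\<bar>)" for i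
  proof -
    have "\<bar>(transpose P *v v) $ i\<bar> = \<bar>\<Sum>j\<in>UNIV. P $ j $ i * v $ j\<bar>"
      by (simp add: vector_matrix_mult_def mult.commute)
    also have "\<dots> \<le> (\<Sum>j\<in>UNIV. \<bar>P $ j $ i * v $ j\<bar>)"
      by (rule sum_abs)
    finally show ?thesis
      by (simp add: abs_mult nonneg)
  qed
  then have "(\<Sum>i\<in>UNIV. \<bar>(transpose P *v v) $ i\<bar>) \<le> (\<Sum>i\<in>UNIV. \<Sum>j\<in>UNIV. P $ j $ i * \<bar>v $ j\<bar>)"
    by (rule sum_mono)
  also have "\<dots> = (\<Sum>j\<in>UNIV. \<bar>v $ j\<bar> * (\<Sum>i\<in>UNIV. P $ j $ i))"
    by (subst sum.swap) (simp add: sum_distrib_left mult.commute)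
  also have "\<dots> \<le> (\<Sum>j\<in>UNIV. \<bar>v $ j\<bar>)"
    by (rule sum_mono) (simp add: mult_left_le row_sum)
  finally show ?thesis .
qed

lemma equilibria_nth:
  assumes "x \<in> equilibria P w c"
  shows "x $ i = min (max ((transpose P *v x + c) $ i) 0) (w $ i)"
  using assms by (metis (mono_tags) equilibria_def mem_Collect_eq sat0_def vec_lambda_beta)

lemma equilibria_dist_eq:
  fixes P :: "real^'n^'n"
  assumes "substochastic P" "x \<in> equilibria P w c" "y \<in> equilibria P w c"
  shows "\<bar>x $ i - y $ i\<bar> = \<bar>(transpose P *v x + c) $ i - (transpose P *v y + c) $ i\<bar>"
proof -
  let ?d = "\<lambda>i. \<bar>(transpose P *v x + c) $ i - (transpose P *v y + c) $ i\<bar>"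
  have le: "\<bar>x $ k - y $ k\<bar> \<le> ?d k" for k
    using equilibria_nth[OF assms(2)] equilibria_nth[OF assms(3)] clamp_dist_le by metis
  have "(\<Sum>k\<in>UNIV. ?d k) \<le> (\<Sum>k\<in>UNIV. \<bar>x $ k - y $ k\<bar>)"
    using sum_abs_transpose_mult_le[OF assms(1), of "x - y"]
    by (simp add: matrix_vector_mult_diff_distrib)
  moreover have "(\<Sum>k\<in>UNIV. \<bar>x $ k - y $ k\<bar>) < (\<Sum>k\<in>UNIV. ?d k)"
    if "\<bar>x $ i - y $ i\<bar> < ?d i"
    using le that by (intro sum_strict_mono_ex1) auto
  ultimately show ?thesis
    using le[of i] by linarith
qed

lemma equilibria_saturated_nth_eq:
  fixes P :: "real^'n^'n"
  assumes "substochastic P" "\<forall>i. 0 \<le> w $ i"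
    and "x \<in> equilibria P w c" "y \<in> equilibria P w c"
    and "x $ i \<noteq> (transpose P *v x + c) $ i"
  shows "y $ i = x $ i"
proof -
  let ?a = "(transpose P *v x + c) $ i" and ?b = "(transpose P *v y + c) $ i"
  have "min (max ?b 0) (w $ i) = min (max ?a 0) (w $ i)"
  proof (rule clamp_dist_eq_imp_eq)
    show "0 \<le> w $ i" using assms(2) ..
    show "min (max ?a 0) (w $ i) \<noteq> ?a"
      using assms(5) equilibria_nth[OF assms(3)] by simp
    show "\<bar>min (max ?a 0) (w $ i) - min (max ?b 0) (w $ i)\<bar> = \<bar>?a - ?b\<bar>"
      using equilibria_dist_eq[OF assms(1,3,4)] equilibria_nth[OF assms(3)]
        equilibria_nth[OF assms(4)] by simp
  qed
  then show ?thesis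
    using equilibria_nth[OF assms(3)] equilibria_nth[OF assms(4)] by simp
qed

theorem corollary1:
  fixes P :: "real^'n^'n" and w c :: "real^'n"
  assumes "substochastic P"
    and "\<forall>i. 0 \<le> w $ i"
  shows "\<exists>Vp V0 Vm :: 'n set.
           Vp \<union> V0 \<union> Vm = UNIV \<and> Vp \<inter> V0 = {} \<and> Vp \<inter> Vm = {} \<and> V0 \<inter> Vm = {} \<and>
           (\<forall>x \<in> equilibria P w c.
               (\<forall>i\<in>Vm. x $ i = 0) \<and> (\<forall>i\<in>Vp. x $ i = w $ i) \<and>
               (\<forall>i\<in>V0. x $ i = c $ i + (\<Sum>j\<in>UNIV. P $ j $ i * x $ j))) \<and>
           (\<forall>x1 \<in> equilibria P w c. \<forall>x2 \<in> equilibria P w c.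
               (\<forall>i\<in>Vm. x1 $ i = x2 $ i) \<and> (\<forall>i\<in>Vp. x1 $ i = x2 $ i))"
proof -
  let ?X = "equilibria P w c" and ?T = "\<lambda>x. transpose P *v x + c"
  define V0 where "V0 = {i. \<forall>x\<in>?X. x $ i = ?T x $ i}"
  define Vm where "Vm = {i. \<exists>z\<in>?X. z $ i \<noteq> ?T z $ i \<and> z $ i = 0}"
  define Vp where "Vp = - (V0 \<union> Vm)"
  have Vm: "x $ i = 0" if "x \<in> ?X" "i \<in> Vm" for x i
  proof -
    obtain z where "z \<in> ?X" "z $ i \<noteq> ?T z $ i" "z $ i = 0"
      using \<open>i \<in> Vm\<close> unfolding Vm_def by blast
    then show ?thesis
      using equilibria_saturated_nth_eq[OF assms _ \<open>x \<in> ?X\<close>] by simp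
  qed
  have Vp: "x $ i = w $ i" if "x \<in> ?X" "i \<in> Vp" for x i
  proof -
    obtain z where z: "z \<in> ?X" "z $ i \<noteq> ?T z $ i" "z $ i \<noteq> 0"
      using \<open>i \<in> Vp\<close> unfolding Vp_def V0_def Vm_def by blast
    then have "z $ i = w $ i"
      using clamp_ne_imp_bound equilibria_nth[OF z(1), of i] by metis
    then show ?thesis
      using equilibria_saturated_nth_eq[OF assms z(1) \<open>x \<in> ?X\<close> z(2)] by simp
  qed
  have V0: "x $ i = c $ i + (\<Sum>j\<in>UNIV. P $ j $ i * x $ j)" if "x \<in> ?X" "i \<in> V0" for x i
    using that by (simp add: V0_def vector_matrix_mult_def mult.commute)
  have "Vp \<union> V0 \<union> Vm = UNIV \<and> Vp \<inter> V0 = {} \<and> Vp \<inter> Vm = {} \<and> V0 \<inter> Vm = {}"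
    unfolding Vp_def V0_def Vm_def by blast
  with Vm Vp V0 show ?thesis
    by (intro exI[of _ Vp] exI[of _ V0] exI[of _ Vm]) simp
qed

end
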